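(* Let $m\ge3$ be odd and let $s=s(m)$. For every integer $n\ge1$ and every $x_0\in 2^n+2^{n+1}\mathbb{Z}_2$ (i.e. $v_2(x_0)=n$), one has $v_2\big(T_m(x_0)-x_0\big)=n+s$.
   Context: $v_2$ is the $2$-adic valuation on $\mathbb{Z}_2$. For an integer $m\ge0$, the $m$-th Chebyshev polynomial is $$T_m(x)=\sum_{k=0}^{\lfloor m/2\rfloor}(-1)^k\frac{m}{m-k}\binom{m-k}{k}2^{m-2k-1}x^{m-2k}.$$ For odd $m\ge3$, $s(m)=\max\{n\ge2:\ 2^n\mid(m+1)\text{ or }2^n\mid(m-1)\}$. *)

theory Defs
  imports Complex_Main
begin

text \<open>2-adic integers, modelled as coherent sequences of residues:
  x k is the residue of x modulo 2^k, in [0, 2^k).\<close>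
definition Z2 :: "(nat \<Rightarrow> int) set" where
  "Z2 = {x. \<forall>k. 0 \<le> x k \<and> x k < 2 ^ k \<and> x (Suc k) mod 2 ^ k = x k}"

definition v2_eq :: "(nat \<Rightarrow> int) \<Rightarrow> nat \<Rightarrow> bool" where
  "v2_eq y n \<longleftrightarrow> y n = 0 \<and> y (Suc n) \<noteq> 0"

text \<open>Chebyshev polynomial T_m, by the explicit formula (used for odd m).\<close>
definition chebT :: "nat \<Rightarrow> real \<Rightarrow> real" where
  "chebT m x = (\<Sum>k\<le>m div 2. (-1) ^ k * (real m / real (m - k)) * real ((m - k) choose k)
                  * (2 powi (int m - 2 * int k - 1)) * x ^ (m - 2 * k))"

text \<open>The 2-adic integer T_m(x) - x, computed residue-wise (T_m has integer
  coefficients, so T_m(x) mod 2^k depends only on x mod 2^k).\<close>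
definition Z2_chebT_sub :: "nat \<Rightarrow> (nat \<Rightarrow> int) \<Rightarrow> (nat \<Rightarrow> int)" where
  "Z2_chebT_sub m x = (\<lambda>k. (\<lfloor>chebT m (of_int (x k))\<rfloor> - x k) mod 2 ^ k)"

definition s_val :: "nat \<Rightarrow> nat" where
  "s_val m = (GREATEST n. n \<ge> 2 \<and> ((2::nat) ^ n dvd m + 1 \<or> (2::nat) ^ n dvd m - 1))"

end

theory Submission
  imports Defs "HOL-Computational_Algebra.Primes"
begin

text \<open>
  Write m = 2q + 1. The addition formulas for Chebyshev polynomials give
  T_m(a) - a = 2 (a^2 - 1) U_q(a) U_{q-1}(a). If v_2(a) = n >= 1, then a^2 - 1 is odd,
  U_{k-1}(a) is odd for odd k, and the doubling formula U_{2k-1} = 2 U_{k-1} T_k (with T_k(a)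
  odd for even k) gives v_2(U_{k-1}(a)) = n + v_2(k) for even k. Exactly one of q, q + 1 is
  even and its valuation is s(m) - 1, hence v_2(T_m(a) - a) = n + s(m). The 2-adic statement
  follows residue by residue, once the explicit formula for T_m is matched with the recurrence.
\<close>

fun cheb_T :: "'a::comm_ring_1 \<Rightarrow> nat \<Rightarrow> 'a" where
  "cheb_T a 0 = 1"
| "cheb_T a (Suc 0) = a"
| "cheb_T a (Suc (Suc n)) = 2 * a * cheb_T a (Suc n) - cheb_T a n"

text \<open>\<open>cheb_L a k\<close> is U_{k-1}(a); the index shift makes \<open>cheb_L a 0 = 0\<close>.\<close>

fun cheb_L :: "'a::comm_ring_1 \<Rightarrow> nat \<Rightarrow> 'a" where
  "cheb_L a 0 = 0"
| "cheb_L a (Suc 0) = 1"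
| "cheb_L a (Suc (Suc n)) = 2 * a * cheb_L a (Suc n) - cheb_L a n"

lemma cheb_Suc:
  "cheb_T a (Suc k) = a * cheb_T a k + (a^2 - 1) * cheb_L a k \<and>
   cheb_L a (Suc k) = a * cheb_L a k + cheb_T a k"
proof (induction k rule: induct_nat_012)
  case (ge2 n)
  then have T: "cheb_T a (Suc n) = a * cheb_T a n + (a^2 - 1) * cheb_L a n"
    and L: "cheb_L a (Suc n) = a * cheb_L a n + cheb_T a n" by blast+
  show ?case unfolding cheb_T.simps cheb_L.simps T L by (simp add: algebra_simps power2_eq_square)
qed (simp_all add: power2_eq_square algebra_simps)

lemmas cheb_T_Suc = cheb_Suc [THEN conjunct1] and cheb_L_Suc = cheb_Suc [THEN conjunct2]

lemma cheb_pell: "cheb_T a k ^ 2 - (a^2 - 1) * cheb_L a k ^ 2 = 1"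
proof (induction k)
  case (Suc k)
  have "cheb_T a (Suc k) ^ 2 - (a^2 - 1) * cheb_L a (Suc k) ^ 2
      = cheb_T a k ^ 2 - (a^2 - 1) * cheb_L a k ^ 2"
    unfolding cheb_T_Suc cheb_L_Suc by (simp add: algebra_simps power2_eq_square)
  with Suc.IH show ?case by simp
qed simp

lemma cheb_add:
  "cheb_T a (i + j) = cheb_T a i * cheb_T a j + (a^2 - 1) * cheb_L a i * cheb_L a j \<and>
   cheb_L a (i + j) = cheb_L a i * cheb_T a j + cheb_T a i * cheb_L a j"
proof (induction j)
  case (Suc j)
  then have T: "cheb_T a (i + j) = cheb_T a i * cheb_T a j + (a^2 - 1) * cheb_L a i * cheb_L a j"
    and L: "cheb_L a (i + j) = cheb_L a i * cheb_T a j + cheb_T a i * cheb_L a j" by blast+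
  show ?case
    unfolding add_Suc_right cheb_T_Suc cheb_L_Suc T L by (simp add: algebra_simps)
qed simp

lemma cheb_L_double: "cheb_L a (2 * k) = 2 * cheb_L a k * cheb_T a k"
proof -
  have "cheb_L a (k + k) = cheb_L a k * cheb_T a k + cheb_T a k * cheb_L a k"
    using cheb_add by blast
  then show ?thesis by (simp only: mult_2) (simp add: algebra_simps)
qed

lemma cheb_T_odd_minus_self:
  "cheb_T a (2 * q + 1) - a = 2 * (a^2 - 1) * cheb_L a (q + 1) * cheb_L a q"
proof -
  have split: "2 * q + 1 = (q + 1) + q" by simp
  have "cheb_T a (2 * q + 1)
      = cheb_T a (q + 1) * cheb_T a q + (a^2 - 1) * cheb_L a (q + 1) * cheb_L a q"
    unfolding split using cheb_add by blast
  also have "\<dots> = a * (cheb_T a q ^ 2 - (a^2 - 1) * cheb_L a q ^ 2)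
      + 2 * (a^2 - 1) * cheb_L a (q + 1) * cheb_L a q"
    unfolding Suc_eq_plus1[symmetric] cheb_T_Suc cheb_L_Suc
    by (simp add: algebra_simps power2_eq_square)
  finally show ?thesis by (simp add: cheb_pell)
qed

lemma cheb_T_eq_L_diff: "2 * cheb_T a (Suc n) = cheb_L a (Suc (Suc n)) - cheb_L a n"
  unfolding cheb_L_Suc cheb_T_Suc by (simp add: algebra_simps power2_eq_square)

definition cheb_U_term :: "'a::comm_ring_1 \<Rightarrow> nat \<Rightarrow> nat \<Rightarrow> 'a" where
  "cheb_U_term a n k = (-1) ^ k * of_nat ((n - k) choose k) * (2 * a) ^ (n - 2 * k)"

lemma cheb_U_term_eq_0: "n < 2 * k \<Longrightarrow> cheb_U_term a n k = 0"
  by (simp add: cheb_U_term_def binomial_eq_0)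

lemma cheb_U_term_rec:
  "cheb_U_term a (Suc (Suc n)) (Suc k) = 2 * a * cheb_U_term a (Suc n) (Suc k) - cheb_U_term a n k"
proof -
  consider "2 * k < n" | "n = 2 * k" | "n < 2 * k" by linarith
  then show ?thesis
  proof cases
    case 1
    then obtain d where d: "n = 2 * k + 1 + d" using less_imp_Suc_add by fastforce
    have "Suc (k + d + 1) choose Suc k = (k + d + 1 choose k) + (k + d + 1 choose Suc k)" by simp
    moreover have "Suc (Suc n) - Suc k = Suc (k + d + 1)" "Suc n - Suc k = k + d + 1"
      "n - k = k + d + 1" "Suc (Suc n) - 2 * Suc k = Suc d" "Suc n - 2 * Suc k = d"
      "n - 2 * k = Suc d"
      using d by simp_all
    ultimately show ?thesis unfolding cheb_U_term_def by (simp add: algebra_simps)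
  qed (simp_all add: cheb_U_term_eq_0, simp add: cheb_U_term_def)
qed

lemma sum_cheb_U_term_trunc:
  "n div 2 \<le> N \<Longrightarrow> (\<Sum>k\<le>N. cheb_U_term a n k) = (\<Sum>k\<le>n div 2. cheb_U_term a n k)"
  by (rule sum.mono_neutral_right) (auto intro: cheb_U_term_eq_0)

lemma cheb_L_Suc_eq_sum: "cheb_L a (Suc n) = (\<Sum>k\<le>n div 2. cheb_U_term a n k)"
proof (induction n rule: induct_nat_012)
  case (ge2 n)
  have "(\<Sum>k\<le>Suc (Suc n) div 2. cheb_U_term a (Suc (Suc n)) k)
      = cheb_U_term a (Suc (Suc n)) 0 + (\<Sum>k\<le>n div 2. cheb_U_term a (Suc (Suc n)) (Suc k))"
    unfolding div2_Suc_Suc by (rule sum.atMost_Suc_shift)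
  also have "\<dots> = 2 * a * (cheb_U_term a (Suc n) 0 + (\<Sum>k\<le>n div 2. cheb_U_term a (Suc n) (Suc k)))
      - (\<Sum>k\<le>n div 2. cheb_U_term a n k)"
    by (simp add: cheb_U_term_rec sum_subtractf sum_distrib_left algebra_simps)
      (simp add: cheb_U_term_def)
  also have "cheb_U_term a (Suc n) 0 + (\<Sum>k\<le>n div 2. cheb_U_term a (Suc n) (Suc k))
      = (\<Sum>k\<le>Suc n div 2. cheb_U_term a (Suc n) k)"
    using sum_cheb_U_term_trunc[of "Suc n" "Suc (n div 2)" a]
    by (simp only: sum.atMost_Suc_shift[symmetric])
  finally show ?case using ge2 by simp
qed (simp_all add: cheb_U_term_def)

lemma chebT_coeff_eq:
  assumes "0 < k" "2 * k < m"
  shows "real m / real (m - k) * real ((m - k) choose k)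
    = real ((m - k) choose k) + real ((m - k - 1) choose (k - 1))"
proof -
  have nz: "real (m - k) \<noteq> 0" and m: "real m = real (m - k) + real k" using assms by auto
  have "real k * real ((m - k) choose k) = real (m - k) * real ((m - k - 1) choose (k - 1))"
    unfolding of_nat_mult[symmetric] using times_binomial_minus1_eq[OF assms(1)] by presburger
  then show ?thesis unfolding m using nz by (simp add: divide_simps algebra_simps)
qed

text \<open>Termwise, the explicit formula satisfies 2 T_m = U_m - U_{m-2}.\<close>

lemma chebT_term_double:
  assumes "2 * k < m"
  shows "2 * ((-1) ^ k * (real m / real (m - k)) * real ((m - k) choose k)
            * 2 powi (int m - 2 * int k - 1) * x ^ (m - 2 * k))
    = cheb_U_term x m k - (if k = 0 then 0 else cheb_U_term x (m - 2) (k - 1))"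
proof -
  have "int m - 2 * int k - 1 = int (m - 2 * k - 1)" "m - 2 * k = Suc (m - 2 * k - 1)"
    using assms by simp_all
  then have pow: "2 * (2::real) powi (int m - 2 * int k - 1) = 2 ^ (m - 2 * k)"
    by (metis power_Suc power_int_of_nat)
  show ?thesis
  proof (cases "k = 0")
    case True
    then show ?thesis using assms pow by (simp add: cheb_U_term_def power_mult_distrib)
  next
    case False
    then obtain j where j: "k = Suc j" using not0_implies_Suc by blast
    then have k0: "0 < k" by simp
    have "m - 2 - j = m - k - 1" "m - 2 - 2 * j = m - 2 * k" using j assms by simp_all
    then have U: "cheb_U_term x (m - 2) (k - 1)
        = - ((-1) ^ k * real ((m - k - 1) choose (k - 1)) * (2 * x) ^ (m - 2 * k))"
      using j by (simp add: cheb_U_term_def)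
    have "2 * ((-1) ^ k * (real m / real (m - k)) * real ((m - k) choose k)
            * 2 powi (int m - 2 * int k - 1) * x ^ (m - 2 * k))
        = (-1) ^ k * (real m / real (m - k) * real ((m - k) choose k))
            * (2 * 2 powi (int m - 2 * int k - 1)) * x ^ (m - 2 * k)"
      by (simp only: mult_ac)
    also have "\<dots> = (-1) ^ k * (real ((m - k) choose k) + real ((m - k - 1) choose (k - 1)))
        * (2 * x) ^ (m - 2 * k)"
      unfolding chebT_coeff_eq[OF k0 assms] pow power_mult_distrib by (simp only: mult_ac)
    finally show ?thesis using False U by (simp add: cheb_U_term_def algebra_simps)
  qed
qed

lemma chebT_eq_cheb_T:
  assumes "odd m"
  shows "chebT m x = cheb_T x m"
proof -
  obtain r where r: "m = 2 * r + 1" using assms oddE by blast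
  show ?thesis
  proof (cases r)
    case 0
    then show ?thesis using r by (simp add: chebT_def)
  next
    case (Suc p)
    have m: "m div 2 = Suc p" "(m - 2) div 2 = p" "Suc (m - 2) = m - 1" using r Suc by simp_all
    have "2 * chebT m x
        = (\<Sum>k\<le>Suc p. cheb_U_term x m k
            - (if k = 0 then 0 else cheb_U_term x (m - 2) (k - 1)))"
      unfolding chebT_def m(1) sum_distrib_left
      by (intro sum.cong refl chebT_term_double) (use r Suc in auto)
    also have "\<dots> = (\<Sum>k\<le>m div 2. cheb_U_term x m k)
        - (\<Sum>k\<le>(m - 2) div 2. cheb_U_term x (m - 2) k)"
      unfolding sum_subtractf m by (simp add: sum.atMost_Suc_shift del: sum.atMost_Suc)
    also have "\<dots> = cheb_L x (Suc m) - cheb_L x (m - 1)"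
      unfolding cheb_L_Suc_eq_sum[symmetric] m(3) ..
    also have "\<dots> = 2 * cheb_T x m"
      using cheb_T_eq_L_diff[of x "Suc (2 * p + 1)"] r Suc by simp
    finally show ?thesis by simp
  qed
qed

definition v2_int_eq :: "int \<Rightarrow> nat \<Rightarrow> bool" where
  "v2_int_eq y n \<longleftrightarrow> (\<exists>u. odd u \<and> y = 2 ^ n * u)"

lemma v2_int_eq_0_iff [simp]: "v2_int_eq y 0 \<longleftrightarrow> odd y"
  by (simp add: v2_int_eq_def)

lemma v2_int_eq_mult:
  assumes "v2_int_eq y i" "v2_int_eq z j"
  shows "v2_int_eq (y * z) (i + j)"
proof -
  obtain u v where "odd u" "y = 2 ^ i * u" "odd v" "z = 2 ^ j * v"
    using assms unfolding v2_int_eq_def by blast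
  then have "odd (u * v) \<and> y * z = 2 ^ (i + j) * (u * v)" by (simp add: power_add algebra_simps)
  then show ?thesis unfolding v2_int_eq_def by blast
qed

lemma v2_int_eq_mod:
  assumes "v2_int_eq y j"
  shows "y mod 2 ^ j = 0" "y mod 2 ^ Suc j \<noteq> 0"
proof -
  obtain u where u: "odd u" "y = 2 ^ j * u" using assms unfolding v2_int_eq_def by blast
  then show "y mod 2 ^ j = 0" by simp
  show "y mod 2 ^ Suc j \<noteq> 0"
  proof
    assume "y mod 2 ^ Suc j = 0"
    then have "2 ^ j * 2 dvd 2 ^ j * u" using u(2) by (simp add: mod_eq_0_iff_dvd mult.commute)
    with u(1) show False by simp
  qed
qed

lemma odd_cheb_L_odd_index: "odd (cheb_L (a::int) (2 * j + 1))"
proof (induction j)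
  case (Suc j)
  have "cheb_L a (2 * Suc j + 1) = 2 * a * cheb_L a (2 * j + 2) - cheb_L a (2 * j + 1)"
    by (simp add: numeral_2_eq_2)
  with Suc.IH show ?case by simp
qed simp

lemma odd_cheb_T_even_index: "even (a::int) \<Longrightarrow> odd (cheb_T a (2 * j))"
proof (induction j)
  case (Suc j)
  have "cheb_T a (2 * Suc j) = 2 * a * cheb_T a (2 * j + 1) - cheb_T a (2 * j)"
    by (simp add: numeral_2_eq_2)
  with Suc show ?case by simp
qed simp

lemma cheb_T_odd_index_eq: "\<exists>t. cheb_T (a::int) (2 * j + 1) = a * (2 * t + 1)"
proof (induction j)
  case 0
  show ?case by (rule exI[of _ 0]) simp
next
  case (Suc j)
  then obtain t where t: "cheb_T a (2 * j + 1) = a * (2 * t + 1)" by blast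
  have "cheb_T a (2 * Suc j + 1) = 2 * a * cheb_T a (2 * j + 2) - cheb_T a (2 * j + 1)"
    by (simp add: numeral_2_eq_2)
  also have "\<dots> = a * (2 * (cheb_T a (2 * j + 2) - t - 1) + 1)" using t by (simp add: algebra_simps)
  finally show ?case by blast
qed

lemma v2_int_eq_cheb_T_odd_index: "v2_int_eq a n \<Longrightarrow> v2_int_eq (cheb_T a (2 * j + 1)) n"
  using cheb_T_odd_index_eq[of a j] v2_int_eq_mult[of a n _ 0] by fastforce

lemma v2_int_eq_cheb_L_even_index:
  assumes a: "v2_int_eq a n" "1 \<le> n" and oo: "odd oo" and e: "0 < e"
  shows "v2_int_eq (cheb_L a (2 ^ e * oo)) (n + e)"
  using e
proof (induction e rule: nat_induct_non_zero)
  case 1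
  obtain j where j: "oo = 2 * j + 1" using oo oddE by blast
  have "odd (cheb_L a oo)" unfolding j by (rule odd_cheb_L_odd_index)
  moreover have "v2_int_eq (cheb_T a oo) n" unfolding j by (rule v2_int_eq_cheb_T_odd_index[OF a(1)])
  ultimately have "v2_int_eq (2 * cheb_L a oo * cheb_T a oo) (1 + 0 + n)"
    by (intro v2_int_eq_mult) (auto simp: v2_int_eq_def)
  then show ?case unfolding power_one_right cheb_L_double by simp
next
  case (Suc e)
  have "even a" using a unfolding v2_int_eq_def by auto
  obtain d where "e = Suc d" using Suc(1) not0_implies_Suc by blast
  then have "odd (cheb_T a (2 ^ e * oo))"
    using odd_cheb_T_even_index[OF \<open>even a\<close>, of "2 ^ d * oo"] by (simp add: mult.assoc)
  then have "v2_int_eq (2 * cheb_L a (2 ^ e * oo) * cheb_T a (2 ^ e * oo)) (1 + (n + e) + 0)"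
    by (intro v2_int_eq_mult Suc.IH) (auto simp: v2_int_eq_def)
  then show ?case by (simp add: cheb_L_double mult.assoc)
qed

lemma pow2_dvd_odd_mult_le:
  assumes "odd (u::nat)" "2 ^ y dvd 2 ^ e * u"
  shows "y \<le> e"
proof (rule ccontr)
  assume "\<not> y \<le> e"
  then have "2 ^ e * 2 dvd 2 ^ e * u"
    using assms(2) by (metis dvd_trans le_imp_power_dvd not_less_eq_eq power_Suc2)
  with assms(1) show False by simp
qed

lemma s_val_eqI:
  assumes "odd oo" "odd u" "1 \<le> e" "{m - 1, m + 1} = {2 ^ Suc e * oo, 2 * u}"
  shows "s_val m = Suc e"
  unfolding s_val_def
proof (rule Greatest_equality)
  show "2 \<le> Suc e \<and> (2 ^ Suc e dvd m + 1 \<or> 2 ^ Suc e dvd m - 1)"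
    using assms(3,4) by (auto simp: doubleton_eq_iff)
next
  fix y assume y: "2 \<le> y \<and> (2 ^ y dvd m + 1 \<or> 2 ^ y dvd m - 1)"
  have "\<not> 2 ^ y dvd 2 ^ 1 * u"
    using pow2_dvd_odd_mult_le[OF assms(2), of y 1] y by linarith
  then show "y \<le> Suc e"
    using y assms(4) pow2_dvd_odd_mult_le[OF assms(1), of y "Suc e"] by (auto simp: doubleton_eq_iff)
qed

lemma consecutive_pow2_decomp:
  assumes "0 < (q::nat)"
  obtains e oo u where "1 \<le> e" "odd oo" "odd u" "{q, q + 1} = {2 ^ e * oo, u}"
proof -
  have even_decomp: "\<exists>e oo. 1 \<le> e \<and> odd oo \<and> k = 2 ^ e * oo"
    if "even k" "k \<noteq> 0" for k :: nat
  proof -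
    obtain oo where oo: "k = 2 ^ multiplicity 2 k * oo" "\<not> 2 dvd oo"
      using multiplicity_decompose'[OF \<open>k \<noteq> 0\<close>, of 2] by auto
    with \<open>even k\<close> have "multiplicity 2 k \<noteq> 0" by (metis mult_1 power_0)
    with oo show ?thesis by (intro exI[of _ "multiplicity 2 k"] exI[of _ oo]) auto
  qed
  show ?thesis
  proof (cases "even q")
    case True
    then show ?thesis using even_decomp[of q] assms that[of _ _ "q + 1"] by auto
  next
    case False
    then show ?thesis using even_decomp[of "q + 1"] that[of _ _ q] by (auto simp: insert_commute)
  qed
qed

lemma s_val_odd_decomp:
  assumes "odd m" "3 \<le> m"
  obtains e oo u where "1 \<le> e" "odd oo" "odd u" "{m div 2, m div 2 + 1} = {2 ^ e * oo, u}"
    "s_val m = Suc e"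
proof -
  have "0 < m div 2" using assms(2) by simp
  then obtain e oo u where e: "1 \<le> e" "odd oo" "odd u"
    and qs: "{m div 2, m div 2 + 1} = {2 ^ e * oo, u}"
    using consecutive_pow2_decomp by blast
  have "{m - 1, m + 1} = (*) 2 ` {m div 2, m div 2 + 1}" using assms(1) by (auto elim!: oddE)
  then have "s_val m = Suc e"
    using s_val_eqI[OF e(2,3,1)] unfolding qs by (simp add: mult.assoc)
  with e qs that show ?thesis by blast
qed

lemma v2_int_eq_cheb_T_sub:
  assumes a: "v2_int_eq a n" "1 \<le> n" and m: "odd m" "3 \<le> m"
  shows "v2_int_eq (cheb_T a m - a) (n + s_val m)"
proof -
  define q where "q = m div 2"
  obtain e oo u where e: "1 \<le> e" "odd oo" "odd u" and qs: "{q, q + 1} = {2 ^ e * oo, u}"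
    and s: "s_val m = Suc e"
    using s_val_odd_decomp[OF m] unfolding q_def by blast
  have "cheb_L a (q + 1) * cheb_L a q = cheb_L a (2 ^ e * oo) * cheb_L a u"
    using qs by (auto simp: doubleton_eq_iff)
  then have diff: "cheb_T a m - a = 2 * (a^2 - 1) * (cheb_L a (2 ^ e * oo) * cheb_L a u)"
    using cheb_T_odd_minus_self[of a q] m(1) unfolding q_def by (simp add: mult.assoc)
  have "odd (a^2 - 1)" using a unfolding v2_int_eq_def by auto
  moreover have "odd (cheb_L a u)" using e(3) odd_cheb_L_odd_index by (metis oddE)
  moreover have "v2_int_eq 2 1" by (simp add: v2_int_eq_def)
  ultimately have
    "v2_int_eq (2 * (a^2 - 1) * (cheb_L a (2 ^ e * oo) * cheb_L a u)) (1 + 0 + (n + e + 0))"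
    using v2_int_eq_cheb_L_even_index[OF a e(2)] e(1) by (intro v2_int_eq_mult) simp_all
  then show ?thesis using diff s by simp
qed

lemma Z2_mod_pow:
  assumes "x \<in> Z2" "j \<le> k"
  shows "x k mod 2 ^ j = x j"
  using assms(2)
proof (induction k rule: dec_induct)
  case base
  show ?case using assms(1) unfolding Z2_def by simp
next
  case (step k)
  have "x (Suc k) mod 2 ^ j = x (Suc k) mod 2 ^ k mod 2 ^ j"
    using step.hyps(1) by (simp add: mod_mod_cancel le_imp_power_dvd)
  also have "\<dots> = x j" using assms(1) step.IH unfolding Z2_def by simp
  finally show ?case .
qed

lemma Z2_v2_eq_residue:
  assumes x: "x \<in> Z2" and v: "v2_eq x n" and k: "Suc n \<le> k"
  shows "v2_int_eq (x k) n"
proof -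
  have Zk: "0 \<le> x i \<and> x i < 2 ^ i \<and> x (Suc i) mod 2 ^ i = x i" for i
    using x unfolding Z2_def by blast
  then have Z: "x (Suc n) mod 2 ^ n = x n" "0 \<le> x (Suc n)" "x (Suc n) < 2 ^ Suc n"
    by blast+
  have "x n = 0" "x (Suc n) \<noteq> 0" using v unfolding v2_eq_def by auto
  with Z(1) have "2 ^ n dvd x (Suc n)" by (simp add: mod_eq_0_iff_dvd)
  then obtain c where c: "x (Suc n) = 2 ^ n * c" ..
  with Z(2,3) \<open>x (Suc n) \<noteq> 0\<close> have "c = 1" by (simp add: zero_le_mult_iff)
  with c have "x k mod 2 ^ Suc n = 2 ^ n" using Z2_mod_pow[OF x k] by simp
  have "x k = x k div 2 ^ Suc n * 2 ^ Suc n + x k mod 2 ^ Suc n"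
    by (rule div_mult_mod_eq[symmetric])
  also have "\<dots> = 2 ^ n * (2 * (x k div 2 ^ Suc n) + 1)"
    unfolding \<open>x k mod 2 ^ Suc n = 2 ^ n\<close> by (simp add: ring_distribs)
  finally have "x k = 2 ^ n * (2 * (x k div 2 ^ Suc n) + 1)" .
  then show ?thesis unfolding v2_int_eq_def by (intro exI[of _ "2 * (x k div 2 ^ Suc n) + 1"]) simp
qed

lemma of_int_cheb_T: "of_int (cheb_T a n) = cheb_T (of_int a) n"
  by (induction n rule: induct_nat_012) simp_all

lemma Z2_chebT_sub_eq:
  assumes "odd m"
  shows "Z2_chebT_sub m x k = (cheb_T (x k) m - x k) mod 2 ^ k"
proof -
  have "chebT m (of_int (x k)) = of_int (cheb_T (x k) m)"
    using chebT_eq_cheb_T[OF assms] by (simp add: of_int_cheb_T)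
  then show ?thesis unfolding Z2_chebT_sub_def by simp
qed

theorem mainTheorem5:
  fixes m n :: nat and x :: "nat \<Rightarrow> int"
  assumes "m \<ge> 3" and "odd m" and "n \<ge> 1"
    and "x \<in> Z2" and "v2_eq x n"
  shows "v2_eq (Z2_chebT_sub m x) (n + s_val m)"
proof -
  let ?j = "n + s_val m"
  have v2: "v2_int_eq (cheb_T (x k) m - x k) ?j" if "Suc n \<le> k" for k
    using v2_int_eq_cheb_T_sub Z2_v2_eq_residue[OF assms(4,5) that] assms(1-3) by blast
  obtain e where "s_val m = Suc e" using s_val_odd_decomp[OF assms(2,1)] by blast
  then have "Suc n \<le> ?j" by simp
  then have "v2_int_eq (cheb_T (x ?j) m - x ?j) ?j"
    "v2_int_eq (cheb_T (x (Suc ?j)) m - x (Suc ?j)) ?j"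
    using v2 by simp_all
  then show ?thesis
    unfolding v2_eq_def Z2_chebT_sub_eq[OF assms(2)] by (intro conjI v2_int_eq_mod)
qed
end
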